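(* Let $q$ be a prime power, and let $D_1$ be a linear $[n,k]$ code over $\mathbb{F}_q$ with $k\times n$ generator matrix $G_1$. Let $\mathrm{MAut}(D_1)$ be the group of $n\times n$ monomial matrices $P$ over $\mathbb{F}_q$ with $D_1P=D_1$, and let $f:\mathrm{MAut}(D_1)\to \mathrm{GL}(k,q)$ be the homomorphism defined by $f(P)G_1=G_1P$. Let $m$ be a positive integer and let $a,b\in\mathbb{F}_q^k$. Suppose that the column vectors $a^T$ and $b^T$ lie in the same orbit of the image $\mathrm{im}(f)\le \mathrm{GL}(k,q)$ acting on $\mathbb{F}_q^k$ (column vectors) by left multiplication. Then the $[n+m,k]$ codes over $\mathbb{F}_q$ with generator matrices \[\begin{pmatrix} G_1 & a^T & \cdots & a^T\end{pmatrix}\quad\text{and}\quad \begin{pmatrix} G_1 & b^T & \cdots & b^T\end{pmatrix}\] (each with $m$ copies of the appended column) are monomially equivalent.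
   Context: Two codes $C,C'$ of length $N$ over $\mathbb{F}_q$ are monomially equivalent if there is an $N\times N$ monomial matrix $M$ over $\mathbb{F}_q$ (a permutation matrix times an invertible diagonal matrix) such that $C'=CM=\{cM : c\in C\}$. For a code $C$, $CM$ means the image of $C$ under right multiplication by $M$, codewords being row vectors. *)

theory Defs
  imports Main "HOL-Combinatorics.Permutations"
begin

text \<open>Vectors of length N over a field are functions nat => 'a, canonically zero at
indices >= N. Matrices are functions nat => nat => 'a with explicit dimensions.\<close>

definition rowspace :: "(nat \<Rightarrow> nat \<Rightarrow> 'a::field) \<Rightarrow> nat \<Rightarrow> nat \<Rightarrow> (nat \<Rightarrow> 'a) set" where
  "rowspace G k N = {(\<lambda>j. if j < N then (\<Sum>i<k. c i * G i j) else 0) | c. True}"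

definition full_row_rank :: "(nat \<Rightarrow> nat \<Rightarrow> 'a::field) \<Rightarrow> nat \<Rightarrow> nat \<Rightarrow> bool" where
  "full_row_rank G k N \<longleftrightarrow>
     (\<forall>c. (\<forall>j<N. (\<Sum>i<k. c i * G i j) = 0) \<longrightarrow> (\<forall>i<k. c i = 0))"

definition monomial_matrix :: "nat \<Rightarrow> (nat \<Rightarrow> nat \<Rightarrow> 'a::field) \<Rightarrow> bool" where
  "monomial_matrix N M \<longleftrightarrow>
     (\<exists>\<sigma> d. \<sigma> permutes {..<N} \<and> (\<forall>i<N. d i \<noteq> 0) \<and>
        (\<forall>i j. M i j = (if i < N \<and> j < N \<and> j = \<sigma> i then d i else 0)))"

definition vec_mat :: "nat \<Rightarrow> (nat \<Rightarrow> 'a::field) \<Rightarrow> (nat \<Rightarrow> nat \<Rightarrow> 'a) \<Rightarrow> (nat \<Rightarrow> 'a)" where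
  "vec_mat N c M = (\<lambda>j. if j < N then (\<Sum>i<N. c i * M i j) else 0)"

definition code_image :: "(nat \<Rightarrow> 'a::field) set \<Rightarrow> nat \<Rightarrow> (nat \<Rightarrow> nat \<Rightarrow> 'a) \<Rightarrow> (nat \<Rightarrow> 'a) set" where
  "code_image C N M = (\<lambda>c. vec_mat N c M) ` C"

definition monomially_equivalent :: "nat \<Rightarrow> (nat \<Rightarrow> 'a::field) set \<Rightarrow> (nat \<Rightarrow> 'a) set \<Rightarrow> bool" where
  "monomially_equivalent N C C' \<longleftrightarrow> (\<exists>M. monomial_matrix N M \<and> C' = code_image C N M)"

definition MAut :: "(nat \<Rightarrow> nat \<Rightarrow> 'a::field) \<Rightarrow> nat \<Rightarrow> nat \<Rightarrow> (nat \<Rightarrow> nat \<Rightarrow> 'a) set" where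
  "MAut G k n = {P. monomial_matrix n P \<and> code_image (rowspace G k n) n P = rowspace G k n}"

definition fhom :: "(nat \<Rightarrow> nat \<Rightarrow> 'a::field) \<Rightarrow> nat \<Rightarrow> nat \<Rightarrow> (nat \<Rightarrow> nat \<Rightarrow> 'a) \<Rightarrow> (nat \<Rightarrow> nat \<Rightarrow> 'a)" where
  "fhom G k n P = (THE A. (\<forall>i j. \<not> (i < k \<and> j < k) \<longrightarrow> A i j = 0) \<and>
      (\<forall>i<k. \<forall>j<n. (\<Sum>l<k. A i l * G l j) = (\<Sum>l<n. G i l * P l j)))"

definition mat_vec :: "nat \<Rightarrow> (nat \<Rightarrow> nat \<Rightarrow> 'a::field) \<Rightarrow> (nat \<Rightarrow> 'a) \<Rightarrow> (nat \<Rightarrow> 'a)" where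
  "mat_vec k A a = (\<lambda>i. if i < k then (\<Sum>j<k. A i j * a j) else 0)"

definition append_cols :: "(nat \<Rightarrow> nat \<Rightarrow> 'a::field) \<Rightarrow> nat \<Rightarrow> nat \<Rightarrow> (nat \<Rightarrow> 'a) \<Rightarrow> (nat \<Rightarrow> nat \<Rightarrow> 'a)" where
  "append_cols G n m a = (\<lambda>i j. if j < n then G i j else if j < n + m then a i else 0)"

end

theory Submission
  imports Defs
begin

text \<open>If \<open>A = f(P)\<close>, so that \<open>A G\<^sub>1 = G\<^sub>1 P\<close>, and \<open>b = A a\<close>, then the monomial matrix
  \<open>diag(P, I\<^sub>m)\<close> maps the codeword \<open>c (G\<^sub>1 | b \<dots> b)\<close> to \<open>(c A) (G\<^sub>1 | a \<dots> a)\<close>. Since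
  \<open>G\<^sub>1\<close> has full row rank and \<open>P\<close> maps the code \<open>D\<^sub>1\<close> onto itself, \<open>A\<close> is invertible, so
  \<open>c \<mapsto> c A\<close> is onto and \<open>diag(P, I\<^sub>m)\<close> maps the second code onto the first.
  Monomial equivalence is symmetric, which gives the claim.\<close>

definition row_comb :: "(nat \<Rightarrow> nat \<Rightarrow> 'a::field) \<Rightarrow> nat \<Rightarrow> nat \<Rightarrow> (nat \<Rightarrow> 'a) \<Rightarrow> nat \<Rightarrow> 'a" where
  "row_comb G k N c = (\<lambda>j. if j < N then (\<Sum>i<k. c i * G i j) else 0)"

lemma rowspace_eq_range_row_comb: "rowspace G k N = range (row_comb G k N)"
  unfolding rowspace_def row_comb_def by auto

lemma row_comb_cong: "(\<And>i. i < k \<Longrightarrow> c i = c' i) \<Longrightarrow> row_comb G k N c = row_comb G k N c'"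
  unfolding row_comb_def by (auto intro!: sum.cong)

lemma sum_mult_sum_swap:
  fixes c :: "nat \<Rightarrow> 'a::comm_semiring_1"
  shows "(\<Sum>i\<in>I. c i * (\<Sum>l\<in>L. A i l * g l)) = (\<Sum>l\<in>L. (\<Sum>i\<in>I. c i * A i l) * g l)"
proof -
  have "(\<Sum>i\<in>I. c i * (\<Sum>l\<in>L. A i l * g l)) = (\<Sum>i\<in>I. \<Sum>l\<in>L. c i * A i l * g l)"
    by (simp add: sum_distrib_left mult.assoc)
  also have "\<dots> = (\<Sum>l\<in>L. \<Sum>i\<in>I. c i * A i l * g l)"
    by (rule sum.swap)
  finally show ?thesis
    by (simp add: sum_distrib_right)
qed

lemma row_comb_append_cols:
  "row_comb (append_cols G n m a) k (n + m) c j =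
     (if j < n then row_comb G k n c j else if j < n + m then (\<Sum>i<k. c i * a i) else 0)"
  by (simp add: row_comb_def append_cols_def)

lemma sum_row_comb_mult:
  "(\<Sum>l<n. row_comb G k n c l * P l j) = (\<Sum>i<k. c i * (\<Sum>l<n. G i l * P l j))"
proof -
  have "(\<Sum>l<n. row_comb G k n c l * P l j) = (\<Sum>l<n. (\<Sum>i<k. c i * G i l) * P l j)"
    by (intro sum.cong) (simp_all add: row_comb_def)
  then show ?thesis
    by (simp add: sum_mult_sum_swap)
qed

lemma full_row_rank_coeffs_eq:
  assumes "full_row_rank G k N"
    and "\<And>j. j < N \<Longrightarrow> (\<Sum>i<k. c i * G i j) = (\<Sum>i<k. c' i * G i j)"
    and "i < k"
  shows "c i = c' i"
proof -
  have "(\<Sum>i<k. (c i - c' i) * G i j) = 0" if "j < N" for j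
    using assms(2)[OF that] by (simp add: left_diff_distrib sum_subtractf)
  with assms(1) have "\<forall>i<k. c i - c' i = 0"
    unfolding full_row_rank_def by (elim allE[of _ "\<lambda>i. c i - c' i"]) blast
  with assms(3) have "c i - c' i = 0"
    by blast
  then show ?thesis
    by simp
qed

lemma vec_mat_monomial:
  assumes "\<sigma> permutes {..<N}"
    and "\<And>i j. M i j = (if i < N \<and> j < N \<and> j = \<sigma> i then d i else 0)"
  shows "vec_mat N c M j = (if j < N then c (inv \<sigma> j) * d (inv \<sigma> j) else 0)"
proof (cases "j < N")
  case True
  have "inv \<sigma> j < N"
    using permutes_in_image[OF permutes_inv[OF assms(1)]] True by auto
  have \<sigma>_eq: "(j = \<sigma> i) = (i = inv \<sigma> j)" for i
    using permutes_inv_eq[OF assms(1)] by metis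
  have "vec_mat N c M j = (\<Sum>i<N. c i * M i j)"
    using True by (simp add: vec_mat_def)
  also have "\<dots> = (\<Sum>i<N. if i = inv \<sigma> j then c i * d i else 0)"
    using True \<sigma>_eq by (intro sum.cong) (auto simp: assms(2))
  also have "\<dots> = c (inv \<sigma> j) * d (inv \<sigma> j)"
    using \<open>inv \<sigma> j < N\<close> by simp
  finally show ?thesis
    using True by simp
qed (simp add: vec_mat_def)

lemma monomial_matrix_left_inverse:
  assumes "monomial_matrix N M"
  obtains M' where "monomial_matrix N M'"
    and "\<And>x. (\<And>j. N \<le> j \<Longrightarrow> x j = 0) \<Longrightarrow> vec_mat N (vec_mat N x M) M' = x"
proof -
  obtain \<sigma> d where \<sigma>: "\<sigma> permutes {..<N}" and d: "\<forall>i<N. d i \<noteq> 0"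
    and M: "\<And>i j. M i j = (if i < N \<and> j < N \<and> j = \<sigma> i then d i else 0)"
    using assms unfolding monomial_matrix_def by blast
  define d' where "d' i = inverse (d (inv \<sigma> i))" for i
  define M' where "M' i j = (if i < N \<and> j < N \<and> j = inv \<sigma> i then d' i else 0)" for i j
  have inv\<sigma>: "inv \<sigma> permutes {..<N}"
    using permutes_inv[OF \<sigma>] .
  have "monomial_matrix N M'"
    unfolding monomial_matrix_def
  proof (intro exI conjI)
    show "\<forall>i<N. d' i \<noteq> 0"
      using d permutes_in_image[OF inv\<sigma>] by (simp add: d'_def)
  qed (use inv\<sigma> M'_def in auto)
  moreover have "vec_mat N (vec_mat N x M) M' = x" if x: "\<And>j. N \<le> j \<Longrightarrow> x j = 0" for x
  proof
    fix j
    show "vec_mat N (vec_mat N x M) M' j = x j"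
    proof (cases "j < N")
      case True
      then have "\<sigma> j < N"
        using permutes_in_image[OF \<sigma>] by auto
      with True show ?thesis
        using vec_mat_monomial[OF inv\<sigma> M'_def] vec_mat_monomial[OF \<sigma> M] d
        by (simp add: permutes_inv_inv[OF \<sigma>] permutes_inverses(2)[OF \<sigma>] d'_def)
    qed (simp add: vec_mat_def x)
  qed
  ultimately show ?thesis
    using that by blast
qed

lemma monomially_equivalent_sym:
  assumes "monomially_equivalent N C C'"
    and "\<And>x j. x \<in> C \<Longrightarrow> N \<le> j \<Longrightarrow> x j = 0"
  shows "monomially_equivalent N C' C"
proof -
  obtain M where M: "monomial_matrix N M" and C': "C' = code_image C N M"
    using assms(1) unfolding monomially_equivalent_def by blast
  obtain M' where M': "monomial_matrix N M'"
    and inverse: "\<And>x. (\<And>j. N \<le> j \<Longrightarrow> x j = 0) \<Longrightarrow> vec_mat N (vec_mat N x M) M' = x"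
    using monomial_matrix_left_inverse[OF M] by blast
  have "code_image C' N M' = (\<lambda>x. vec_mat N (vec_mat N x M) M') ` C"
    unfolding C' code_image_def by (simp add: image_image)
  also have "\<dots> = C"
    using inverse assms(2) by simp
  finally show ?thesis
    using M' unfolding monomially_equivalent_def by blast
qed

definition mat_extend_id :: "nat \<Rightarrow> nat \<Rightarrow> (nat \<Rightarrow> nat \<Rightarrow> 'a::field) \<Rightarrow> nat \<Rightarrow> nat \<Rightarrow> 'a" where
  "mat_extend_id n m P =
     (\<lambda>i j. if i < n \<and> j < n then P i j else if n \<le> i \<and> i < n + m \<and> i = j then 1 else 0)"

lemma monomial_matrix_extend_id:
  assumes "monomial_matrix n P"
  shows "monomial_matrix (n + m) (mat_extend_id n m P)"
proof -
  obtain \<sigma> d where \<sigma>: "\<sigma> permutes {..<n}" and d: "\<forall>i<n. d i \<noteq> 0"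
    and P: "\<And>i j. P i j = (if i < n \<and> j < n \<and> j = \<sigma> i then d i else 0)"
    using assms unfolding monomial_matrix_def by blast
  define e where "e i = (if i < n then d i else 1)" for i
  have \<sigma>_lt: "\<sigma> i < n" if "i < n" for i
    using permutes_in_image[OF \<sigma>] that by auto
  have \<sigma>_fix: "\<sigma> i = i" if "\<not> i < n" for i
    using permutes_not_in[OF \<sigma>] that by auto
  have "\<sigma> permutes {..<n + m}"
    using permutes_subset[OF \<sigma>] by auto
  moreover have "\<forall>i<n + m. e i \<noteq> 0"
    using d by (simp add: e_def)
  moreover have "\<forall>i j. mat_extend_id n m P i j = (if i < n + m \<and> j < n + m \<and> j = \<sigma> i then e i else 0)"
    using \<sigma>_lt \<sigma>_fix by (auto simp: mat_extend_id_def P e_def)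
  ultimately show ?thesis
    unfolding monomial_matrix_def by blast
qed

lemma vec_mat_extend_id:
  "vec_mat (n + m) x (mat_extend_id n m P) j =
     (if j < n then (\<Sum>i<n. x i * P i j) else if j < n + m then x j else 0)"
proof -
  have "(\<Sum>i<n + m. x i * mat_extend_id n m P i j) = (\<Sum>i<n. x i * P i j)" if "j < n"
    using that by (intro sum.mono_neutral_cong_right) (auto simp: mat_extend_id_def)
  moreover have "(\<Sum>i<n + m. x i * mat_extend_id n m P i j) = x j" if "n \<le> j" "j < n + m"
  proof -
    have "(\<Sum>i<n + m. x i * mat_extend_id n m P i j) = (\<Sum>i<n + m. if i = j then x i else 0)"
      using that by (intro sum.cong) (auto simp: mat_extend_id_def)
    then show ?thesis
      using that by simp
  qed
  ultimately show ?thesis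
    by (simp add: vec_mat_def)
qed

lemma vec_mat_row_comb_append_cols_extend_id:
  assumes AG: "\<And>i j. i < k \<Longrightarrow> j < n \<Longrightarrow> (\<Sum>l<k. A i l * G l j) = (\<Sum>l<n. G i l * P l j)"
    and b: "\<And>i. i < k \<Longrightarrow> b i = (\<Sum>l<k. A i l * a l)"
  shows "vec_mat (n + m) (row_comb (append_cols G n m b) k (n + m) c) (mat_extend_id n m P) =
           row_comb (append_cols G n m a) k (n + m) (\<lambda>l. \<Sum>i<k. c i * A i l)"
proof
  fix j
  consider (left) "j < n" | (right) "n \<le> j" "j < n + m" | (outside) "n + m \<le> j"
    by linarith
  then show "vec_mat (n + m) (row_comb (append_cols G n m b) k (n + m) c) (mat_extend_id n m P) j =
      row_comb (append_cols G n m a) k (n + m) (\<lambda>l. \<Sum>i<k. c i * A i l) j"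
  proof cases
    case left
    have "(\<Sum>l<n. row_comb (append_cols G n m b) k (n + m) c l * P l j) =
        (\<Sum>l<n. row_comb G k n c l * P l j)"
      by (intro sum.cong) (simp_all add: row_comb_append_cols)
    also have "\<dots> = (\<Sum>i<k. c i * (\<Sum>l<k. A i l * G l j))"
      using left by (simp add: sum_row_comb_mult AG)
    also have "\<dots> = (\<Sum>l<k. (\<Sum>i<k. c i * A i l) * G l j)"
      by (rule sum_mult_sum_swap)
    finally show ?thesis
      using left by (simp add: vec_mat_extend_id row_comb_def append_cols_def)
  next
    case right
    have "(\<Sum>i<k. c i * b i) = (\<Sum>i<k. c i * (\<Sum>l<k. A i l * a l))"
      by (intro sum.cong) (simp_all add: b)
    also have "\<dots> = (\<Sum>l<k. (\<Sum>i<k. c i * A i l) * a l)"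
      by (rule sum_mult_sum_swap)
    finally show ?thesis
      using right by (simp add: vec_mat_extend_id row_comb_append_cols)
  next
    case outside
    then show ?thesis
      by (simp add: vec_mat_extend_id row_comb_append_cols)
  qed
qed

lemma code_image_rowspace_append_cols:
  assumes AG: "\<And>i j. i < k \<Longrightarrow> j < n \<Longrightarrow> (\<Sum>l<k. A i l * G l j) = (\<Sum>l<n. G i l * P l j)"
    and b: "\<And>i. i < k \<Longrightarrow> b i = (\<Sum>l<k. A i l * a l)"
    and surj: "\<And>c'. \<exists>c. \<forall>l<k. (\<Sum>i<k. c i * A i l) = c' l"
  shows "code_image (rowspace (append_cols G n m b) k (n + m)) (n + m) (mat_extend_id n m P) =
           rowspace (append_cols G n m a) k (n + m)"
proof -
  let ?row = "row_comb (append_cols G n m a) k (n + m)"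
  have "code_image (rowspace (append_cols G n m b) k (n + m)) (n + m) (mat_extend_id n m P) =
      range (\<lambda>c. ?row (\<lambda>l. \<Sum>i<k. c i * A i l))"
    unfolding code_image_def rowspace_eq_range_row_comb
    by (simp add: image_image vec_mat_row_comb_append_cols_extend_id[OF AG b])
  also have "\<dots> = range ?row"
  proof (intro subset_antisym subsetI)
    fix y assume "y \<in> range ?row"
    then obtain c' where y: "y = ?row c'"
      by blast
    obtain c where "\<forall>l<k. (\<Sum>i<k. c i * A i l) = c' l"
      using surj by blast
    then have "y = ?row (\<lambda>l. \<Sum>i<k. c i * A i l)"
      unfolding y by (intro row_comb_cong) simp
    then show "y \<in> range (\<lambda>c. ?row (\<lambda>l. \<Sum>i<k. c i * A i l))"
      by blast
  qed auto
  finally show ?thesis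
    unfolding rowspace_eq_range_row_comb .
qed

lemma MAut_row_mult_in_rowspace:
  assumes "P \<in> MAut G k n" and "i < k"
  shows "\<exists>c. \<forall>j<n. (\<Sum>l<n. G i l * P l j) = (\<Sum>l<k. c l * G l j)"
proof -
  define e where "e l = (if l = i then 1 else 0 :: 'a)" for l
  have "(\<Sum>l<k. e l * G l j) = (\<Sum>l<k. if l = i then G l j else 0)" for j
    by (intro sum.cong) (simp_all add: e_def)
  then have unit_row: "(\<Sum>l<k. e l * G l j) = G i j" for j
    using assms(2) by simp
  have "row_comb G k n e = (\<lambda>j. if j < n then G i j else 0)"
    unfolding row_comb_def unit_row ..
  moreover have "row_comb G k n e \<in> rowspace G k n"
    by (simp add: rowspace_eq_range_row_comb)
  ultimately have "vec_mat n (\<lambda>j. if j < n then G i j else 0) P \<in> rowspace G k n"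
    using assms(1) unfolding MAut_def code_image_def by force
  then obtain c where c: "vec_mat n (\<lambda>j. if j < n then G i j else 0) P = row_comb G k n c"
    by (auto simp: rowspace_eq_range_row_comb)
  have "(\<Sum>l<n. G i l * P l j) = (\<Sum>l<k. c l * G l j)" if "j < n" for j
    using fun_cong[OF c, of j] that by (simp add: vec_mat_def row_comb_def)
  then show ?thesis
    by blast
qed

lemma fhom_mult:
  assumes "full_row_rank G k n" and "P \<in> MAut G k n" and "i < k" and "j < n"
  shows "(\<Sum>l<k. fhom G k n P i l * G l j) = (\<Sum>l<n. G i l * P l j)"
proof -
  let ?intertwines = "\<lambda>A. (\<forall>i j. \<not> (i < k \<and> j < k) \<longrightarrow> A i j = 0) \<and>
      (\<forall>i<k. \<forall>j<n. (\<Sum>l<k. A i l * G l j) = (\<Sum>l<n. G i l * P l j))"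
  have "\<forall>i. \<exists>c. i < k \<longrightarrow> (\<forall>j<n. (\<Sum>l<n. G i l * P l j) = (\<Sum>l<k. c l * G l j))"
    using MAut_row_mult_in_rowspace[OF assms(2)] by blast
  from choice[OF this] obtain C
    where C: "\<forall>i<k. \<forall>j<n. (\<Sum>l<n. G i l * P l j) = (\<Sum>l<k. C i l * G l j)"
    by blast
  define A where "A i l = (if i < k \<and> l < k then C i l else 0)" for i l
  have "?intertwines A"
    using C by (simp add: A_def)
  moreover have "B = A" if B: "?intertwines B" for B
  proof (intro ext)
    fix i l
    show "B i l = A i l"
    proof (cases "i < k \<and> l < k")
      case True
      show ?thesis
      proof (rule full_row_rank_coeffs_eq[OF assms(1), of "B i" "A i" l])
        show "(\<Sum>l<k. B i l * G l j) = (\<Sum>l<k. A i l * G l j)" if "j < n" for j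
          using B \<open>?intertwines A\<close> True that by simp
      qed (use True in simp)
    next
      case False
      with B have "B i l = 0"
        by blast
      with False show ?thesis
        by (auto simp: A_def)
    qed
  qed
  ultimately have "?intertwines (fhom G k n P)"
    unfolding fhom_def by (rule theI)
  then show ?thesis
    using assms(3,4) by blast
qed

lemma MAut_coeffs_mult_surj:
  assumes frr: "full_row_rank G k n" and P: "P \<in> MAut G k n"
    and AG: "\<And>i j. i < k \<Longrightarrow> j < n \<Longrightarrow> (\<Sum>l<k. A i l * G l j) = (\<Sum>l<n. G i l * P l j)"
  shows "\<exists>c. \<forall>l<k. (\<Sum>i<k. c i * A i l) = c' l"
proof -
  have "row_comb G k n c' \<in> code_image (rowspace G k n) n P"
    using P unfolding MAut_def by (simp add: rowspace_eq_range_row_comb)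
  then obtain c where c: "row_comb G k n c' = vec_mat n (row_comb G k n c) P"
    unfolding code_image_def rowspace_eq_range_row_comb by blast
  have "(\<Sum>l<k. c' l * G l j) = (\<Sum>l<k. (\<Sum>i<k. c i * A i l) * G l j)" if "j < n" for j
  proof -
    have "(\<Sum>l<k. c' l * G l j) = (\<Sum>l<n. row_comb G k n c l * P l j)"
      using fun_cong[OF c, of j] that by (simp add: row_comb_def vec_mat_def)
    also have "\<dots> = (\<Sum>i<k. c i * (\<Sum>l<k. A i l * G l j))"
      using that by (simp add: sum_row_comb_mult AG)
    also have "\<dots> = (\<Sum>l<k. (\<Sum>i<k. c i * A i l) * G l j)"
      by (rule sum_mult_sum_swap)
    finally show ?thesis .
  qed
  then have "c' l = (\<Sum>i<k. c i * A i l)" if "l < k" for l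
    using full_row_rank_coeffs_eq[OF frr, of c' "\<lambda>l. \<Sum>i<k. c i * A i l" l] that by simp
  then show ?thesis
    by auto
qed

theorem lemma2p1:
  fixes G1 :: "nat \<Rightarrow> nat \<Rightarrow> 'a::{finite,field}"
    and a b :: "nat \<Rightarrow> 'a"
    and n k m :: nat
  assumes "full_row_rank G1 k n"
    and "m > 0"
    and "\<exists>P \<in> MAut G1 k n. \<forall>i<k. b i = mat_vec k (fhom G1 k n P) a i"
  shows "monomially_equivalent (n + m)
           (rowspace (append_cols G1 n m a) k (n + m))
           (rowspace (append_cols G1 n m b) k (n + m))"
proof -
  obtain P where P: "P \<in> MAut G1 k n" and b: "\<forall>i<k. b i = mat_vec k (fhom G1 k n P) a i"
    using assms(3) by blast
  let ?A = "fhom G1 k n P"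
  have AG: "\<And>i j. i < k \<Longrightarrow> j < n \<Longrightarrow> (\<Sum>l<k. ?A i l * G1 l j) = (\<Sum>l<n. G1 i l * P l j)"
    using fhom_mult[OF assms(1) P] .
  have bA: "\<And>i. i < k \<Longrightarrow> b i = (\<Sum>l<k. ?A i l * a l)"
    using b by (simp add: mat_vec_def)
  have "monomial_matrix (n + m) (mat_extend_id n m P)"
    using P unfolding MAut_def by (simp add: monomial_matrix_extend_id)
  moreover note code_image_rowspace_append_cols[OF AG bA MAut_coeffs_mult_surj[OF assms(1) P AG]]
  ultimately have "monomially_equivalent (n + m) (rowspace (append_cols G1 n m b) k (n + m))
      (rowspace (append_cols G1 n m a) k (n + m))"
    unfolding monomially_equivalent_def by (intro exI[of _ "mat_extend_id n m P"]) simp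
  then show ?thesis
    by (rule monomially_equivalent_sym) (auto simp: rowspace_def)
qed

end
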